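(* Let $\mathfrak{X}$ be an infinite-dimensional complex separable Hilbert space and $T:\mathcal{D}(T)\subseteq\mathfrak{X}\to\mathfrak{X}$ a densely defined symmetric operator with $T^{-1}\in B(\mathfrak{X})$ compact. Let $\{z_n\}_{n\ge1}$ be the distinct eigenvalues of $T$ and $Q$ a scalar entire function whose zeros are exactly the $z_n$, all simple. Let $F$ be the $B(\mathfrak{X})$-valued entire function with $F(z)=Q(z)(zI-T)^{-1}$ for $z\notin\{z_n\}$, and let $\mathcal{H}=\mathcal{H}_F$. Then every $f\in\mathcal{H}$ is completely determined by $\{f(z_n)\}_{n\ge1}$ and $$f(z)=\sum_{n=1}^\infty\frac{Q(z)}{(z-z_n)Q'(z_n)}f(z_n)\quad\text{for all }z\in\mathbb{C}.$$
   Context: $\mathcal{H}_F=\{F(\cdot)u:u\in\mathfrak{X}\}$ with norm $\|f\|=\inf\{\|w\|_{\mathfrak{X}}:F(\cdot)w=f\}$; it is a reproducing kernel Hilbert space of $\mathfrak{X}$-valued entire functions with kernel $K_\gamma(z)=F(z)F(\gamma)^*$. *)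

theory Defs
  imports "HOL-Analysis.Analysis"
begin

class complex_vector = real_vector +
  fixes scaleC :: "complex \<Rightarrow> 'a \<Rightarrow> 'a" (infixr "*\<^sub>C" 75)
  assumes scaleC_add_right: "a *\<^sub>C (x + y) = a *\<^sub>C x + a *\<^sub>C y"
    and scaleC_add_left: "(a + b) *\<^sub>C x = a *\<^sub>C x + b *\<^sub>C x"
    and scaleC_scaleC: "a *\<^sub>C (b *\<^sub>C x) = (a * b) *\<^sub>C x"
    and scaleC_one: "1 *\<^sub>C x = x"
    and scaleR_scaleC: "scaleR r x = complex_of_real r *\<^sub>C x"

class complex_inner = complex_vector + real_normed_vector +
  fixes cinner :: "'a \<Rightarrow> 'a \<Rightarrow> complex"
  assumes cinner_commute: "cinner x y = cnj (cinner y x)"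
    and cinner_add_left: "cinner (x + y) z = cinner x z + cinner y z"
    and cinner_scaleC_left: "cinner (r *\<^sub>C x) y = cnj r * cinner x y"
    and cinner_self_pos: "x \<noteq> 0 \<Longrightarrow> Re (cinner x x) > 0"
    and norm_eq_sqrt_cinner: "norm x = sqrt (Re (cinner x x))"

class chilbert_space = complex_inner + complete_space

definition cspan :: "'a::complex_vector set \<Rightarrow> 'a set" where
  "cspan S = {(\<Sum>x\<in>A. c x *\<^sub>C x) | A c. finite A \<and> A \<subseteq> S}"

definition separable_hspace :: "'a::topological_space itself \<Rightarrow> bool" where
  "separable_hspace _ \<longleftrightarrow> (\<exists>S::'a set. countable S \<and> closure S = UNIV)"

definition infinite_dimensional :: "'a::complex_vector itself \<Rightarrow> bool" where
  "infinite_dimensional _ \<longleftrightarrow> \<not> (\<exists>S::'a set. finite S \<and> cspan S = UNIV)"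

definition csubspace :: "'a::complex_vector set \<Rightarrow> bool" where
  "csubspace D \<longleftrightarrow> 0 \<in> D \<and> (\<forall>x\<in>D. \<forall>y\<in>D. x + y \<in> D) \<and> (\<forall>c. \<forall>x\<in>D. c *\<^sub>C x \<in> D)"

definition clinear_on :: "'a::complex_vector set \<Rightarrow> ('a \<Rightarrow> 'b::complex_vector) \<Rightarrow> bool" where
  "clinear_on D T \<longleftrightarrow> (\<forall>x\<in>D. \<forall>y\<in>D. T (x + y) = T x + T y) \<and> (\<forall>c. \<forall>x\<in>D. T (c *\<^sub>C x) = c *\<^sub>C T x)"

definition densely_defined_op :: "'a::complex_inner set \<Rightarrow> ('a \<Rightarrow> 'a) \<Rightarrow> bool" where
  "densely_defined_op D T \<longleftrightarrow> csubspace D \<and> clinear_on D T \<and> closure D = UNIV"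

definition symmetric_op :: "'a::complex_inner set \<Rightarrow> ('a \<Rightarrow> 'a) \<Rightarrow> bool" where
  "symmetric_op D T \<longleftrightarrow> densely_defined_op D T \<and>
     (\<forall>x\<in>D. \<forall>y\<in>D. cinner (T x) y = cinner x (T y))"

definition compact_bounded_inverse :: "'a::complex_inner set \<Rightarrow> ('a \<Rightarrow> 'a) \<Rightarrow> bool" where
  "compact_bounded_inverse D T \<longleftrightarrow> bij_betw T D UNIV \<and> bounded_linear (inv_into D T)
     \<and> compact (closure (inv_into D T ` cball 0 1))"

definition op_eigenvalue :: "'a::complex_vector set \<Rightarrow> ('a \<Rightarrow> 'a) \<Rightarrow> complex \<Rightarrow> bool" where
  "op_eigenvalue D T mu \<longleftrightarrow> (\<exists>x\<in>D. x \<noteq> 0 \<and> T x = mu *\<^sub>C x)"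

definition resolvent :: "'a::complex_vector set \<Rightarrow> ('a \<Rightarrow> 'a) \<Rightarrow> complex \<Rightarrow> 'a \<Rightarrow> 'a" where
  "resolvent D T z = inv_into D (\<lambda>y. z *\<^sub>C y - T y)"

definition cbounded_op :: "('a::complex_inner \<Rightarrow>\<^sub>L 'a) \<Rightarrow> bool" where
  "cbounded_op A \<longleftrightarrow> (\<forall>c x. blinfun_apply A (c *\<^sub>C x) = c *\<^sub>C blinfun_apply A x)"

definition op_entire :: "(complex \<Rightarrow> ('a::complex_inner \<Rightarrow>\<^sub>L 'a)) \<Rightarrow> bool" where
  "op_entire F \<longleftrightarrow> (\<forall>z. \<exists>L::'a \<Rightarrow>\<^sub>L 'a.
     ((\<lambda>w. onorm (\<lambda>x. inverse (w - z) *\<^sub>C (F w x - F z x) - L x)) \<longlongrightarrow> 0) (at z))"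

definition H_space :: "(complex \<Rightarrow> ('a::complex_inner \<Rightarrow>\<^sub>L 'a)) \<Rightarrow> (complex \<Rightarrow> 'a) set" where
  "H_space F = {(\<lambda>z. blinfun_apply (F z) u) | u. True}"

text \<open>Interpolation kernel \<open>Q(z)/((z - z_n) Q'(z_n))\<close>, with its removable value 1 at \<open>z = z_n\<close>.\<close>
definition interp_kernel :: "(complex \<Rightarrow> complex) \<Rightarrow> complex \<Rightarrow> complex \<Rightarrow> complex" where
  "interp_kernel Q zn z = (if z = zn then 1 else Q z / ((z - zn) * deriv Q zn))"

end

theory Submission
  imports Defs
begin

text \<open>Since \<open>T\<^sup>-\<^sup>1\<close> is compact and symmetric, every \<open>u\<close> is the sum of its orthogonal projections
  \<open>u\<^sub>n\<close> onto the eigenspaces of \<open>T\<close>: a nonzero closed subspace orthogonal to all of them would be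
  invariant under \<open>T\<^sup>-\<^sup>1\<close> and hence contain an eigenvector of \<open>T\<^sup>-\<^sup>1\<close>, found by maximising
  \<open>\<parallel>T\<^sup>-\<^sup>1 x\<parallel>\<close> on its unit sphere. On the eigenspace of \<open>z\<^sub>m\<close> the operator \<open>F(w)\<close> is
  multiplication by \<open>Q(w)/(w - z\<^sub>m)\<close>, so continuity of \<open>F\<close> gives \<open>F(z\<^sub>n) u = Q'(z\<^sub>n) u\<^sub>n\<close>.
  Applying \<open>F(w)\<close> to \<open>u = \<Sum> u\<^sub>n\<close> yields the interpolation series, whose right-hand side only
  depends on the values \<open>f(z\<^sub>n)\<close>.\<close>

section \<open>Complex inner product spaces\<close>

lemma scaleC_zero_left [simp]: "(0::complex) *\<^sub>C (x::'a::complex_vector) = 0"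
proof -
  have "0 *\<^sub>C x = 0 *\<^sub>C x + (0::complex) *\<^sub>C x" by (metis add_0 scaleC_add_left)
  thus ?thesis by simp
qed

lemma scaleC_zero_right [simp]: "c *\<^sub>C (0::'a::complex_vector) = 0"
proof -
  have "c *\<^sub>C (0::'a) = c *\<^sub>C 0 + c *\<^sub>C 0" by (metis add_0 scaleC_add_right)
  thus ?thesis by simp
qed

lemma scaleC_diff_left: "(a - b) *\<^sub>C (x::'a::complex_vector) = a *\<^sub>C x - b *\<^sub>C x"
  by (metis add_diff_cancel diff_add_cancel scaleC_add_left)

lemma scaleC_diff_right: "c *\<^sub>C ((x::'a::complex_vector) - y) = c *\<^sub>C x - c *\<^sub>C y"
  by (metis add_diff_cancel diff_add_cancel scaleC_add_right)

lemma scaleC_minus_left: "(- a) *\<^sub>C (x::'a::complex_vector) = - (a *\<^sub>C x)"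
  using scaleC_diff_left[of 0 a x] by simp

lemma cinner_add_right: "cinner (x::'a::complex_inner) (y + z) = cinner x y + cinner x z"
  by (metis cinner_add_left cinner_commute complex_cnj_add)

lemma cinner_scaleC_right: "cinner (x::'a::complex_inner) (r *\<^sub>C y) = r * cinner x y"
  by (metis cinner_commute cinner_scaleC_left complex_cnj_cnj complex_cnj_mult)

lemma cinner_zero_left [simp]: "cinner 0 (x::'a::complex_inner) = 0"
  using cinner_add_left[of 0 0 x] by simp

lemma cinner_zero_right [simp]: "cinner (x::'a::complex_inner) 0 = 0"
  using cinner_add_right[of x 0 0] by simp

lemma cinner_diff_left: "cinner ((x::'a::complex_inner) - y) z = cinner x z - cinner y z"
  by (metis add_diff_cancel_right' cinner_add_left diff_add_cancel)

lemma cinner_diff_right: "cinner (x::'a::complex_inner) (y - z) = cinner x y - cinner x z"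
  by (metis add_diff_cancel_right' cinner_add_right diff_add_cancel)

lemma cinner_sum_left: "cinner (sum f A) (x::'a::complex_inner) = (\<Sum>i\<in>A. cinner (f i) x)"
  by (induction A rule: infinite_finite_induct) (auto simp: cinner_add_left)

lemma cinner_sum_right: "cinner (x::'a::complex_inner) (sum f A) = (\<Sum>i\<in>A. cinner x (f i))"
  by (induction A rule: infinite_finite_induct) (auto simp: cinner_add_right)

lemma cinner_scaleR_right: "cinner (x::'a::complex_inner) (r *\<^sub>R y) = of_real r * cinner x y"
  by (simp add: scaleR_scaleC cinner_scaleC_right)

lemma cinner_self_real: "cinner (x::'a::complex_inner) x = of_real ((norm x)\<^sup>2)"
proof -
  have "Im (cinner x x) = 0" using cinner_commute[of x x]
    by (metis complex_cnj_cancel_iff complex_cnj_zero_iff complex_is_Real_iff Reals_cnj_iff)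
  moreover have "Re (cinner x x) = (norm x)\<^sup>2"
    using norm_eq_sqrt_cinner[of x]
    by (metis cinner_self_pos le_less norm_eq_zero real_sqrt_pow2 zero_complex.simps(1)
        cinner_zero_left power2_eq_square real_sqrt_eq_zero_cancel_iff)
  ultimately show ?thesis by (simp add: complex_eq_iff)
qed

lemma cinner_self_eq_zero: "cinner (x::'a::complex_inner) x = 0 \<longleftrightarrow> x = 0"
  by (simp add: cinner_self_real)

lemma norm_scaleC: "norm (c *\<^sub>C (x::'a::complex_inner)) = cmod c * norm x"
proof -
  have "of_real ((norm (c *\<^sub>C x))\<^sup>2) = cinner (c *\<^sub>C x) (c *\<^sub>C x)" by (simp add: cinner_self_real)
  also have "\<dots> = cnj c * c * cinner x x" by (simp add: cinner_scaleC_left cinner_scaleC_right)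
  also have "\<dots> = of_real ((cmod c * norm x)\<^sup>2)"
    by (simp add: cinner_self_real complex_norm_square[symmetric] power_mult_distrib mult.commute)
  finally have "(norm (c *\<^sub>C x))\<^sup>2 = (cmod c * norm x)\<^sup>2" using of_real_eq_iff by blast
  thus ?thesis by (simp add: power2_eq_iff_nonneg)
qed

lemma power2_norm_diff:
  "(norm ((x::'a::complex_inner) - y))\<^sup>2 = (norm x)\<^sup>2 - 2 * Re (cinner x y) + (norm y)\<^sup>2"
proof -
  have "of_real ((norm (x - y))\<^sup>2) = cinner (x - y) (x - y)" by (simp add: cinner_self_real)
  also have "\<dots> = cinner x x - cinner x y - cinner y x + cinner y y"
    by (simp add: cinner_diff_left cinner_diff_right)
  finally have "of_real ((norm (x - y))\<^sup>2) = cinner x x - cinner x y - cinner y x + cinner y y" .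
  hence "(norm (x - y))\<^sup>2 = Re (cinner x x - cinner x y - cinner y x + cinner y y)"
    by (metis Re_complex_of_real)
  also have "\<dots> = (norm x)\<^sup>2 - 2 * Re (cinner x y) + (norm y)\<^sup>2"
    using cinner_commute[of y x] by (simp add: cinner_self_real)
  finally show ?thesis .
qed

lemma power2_norm_add:
  "(norm ((x::'a::complex_inner) + y))\<^sup>2 = (norm x)\<^sup>2 + 2 * Re (cinner x y) + (norm y)\<^sup>2"
  using power2_norm_diff[of x "-y"] by (simp add: cinner_diff_right[of x 0 y, simplified])

lemma power2_norm_diff_scaleC: "(norm ((v::'a::complex_inner) - t *\<^sub>C e))\<^sup>2
    = (norm v)\<^sup>2 - 2 * Re (t * cinner v e) + (cmod t)\<^sup>2 * (norm e)\<^sup>2"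
  by (simp add: power2_norm_diff cinner_scaleC_right norm_scaleC power_mult_distrib)

lemma parallelogram_law:
  "(norm ((x::'a::complex_inner) - y))\<^sup>2 + (norm (x + y))\<^sup>2 = 2 * (norm x)\<^sup>2 + 2 * (norm y)\<^sup>2"
  by (simp add: power2_norm_diff power2_norm_add)

lemma cinner_Cauchy_Schwarz: "cmod (cinner (x::'a::complex_inner) y) \<le> norm x * norm y"
proof (cases "y = 0")
  case False
  define c where "c = cinner x y"
  define t where "t = cnj c / of_real ((norm y)\<^sup>2)"
  have ny: "norm y > 0" using False by simp
  have "0 \<le> (norm (x - t *\<^sub>C y))\<^sup>2" by simp
  also have "\<dots> = (norm x)\<^sup>2 - 2 * Re (t * c) + (cmod t)\<^sup>2 * (norm y)\<^sup>2"
    by (simp add: power2_norm_diff_scaleC c_def)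
  also have "t * c = of_real ((cmod c)\<^sup>2 / (norm y)\<^sup>2)"
    by (simp add: t_def complex_norm_square[symmetric] mult.commute)
  also have "(cmod t)\<^sup>2 = (cmod c)\<^sup>2 / ((norm y)\<^sup>2)\<^sup>2"
    by (simp add: t_def norm_divide power_divide norm_power)
  finally have "0 \<le> (norm x)\<^sup>2 - (cmod c)\<^sup>2 / (norm y)\<^sup>2"
    using ny by (simp add: field_simps power2_eq_square)
  hence "(cmod c)\<^sup>2 \<le> (norm x * norm y)\<^sup>2" using ny
    by (simp add: field_simps power_mult_distrib)
  thus ?thesis unfolding c_def by (simp add: power2_le_iff_abs_le)
qed simp

lemma bounded_linear_cinner_right: "bounded_linear (\<lambda>y. cinner (x::'a::complex_inner) y)"
proof (rule bounded_linear_intro[where K="norm x"])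
  show "cmod (cinner x y) \<le> norm y * norm x" for y
    by (metis cinner_Cauchy_Schwarz mult.commute)
qed (simp_all add: cinner_add_right cinner_scaleR_right scaleR_conv_of_real)

lemma bounded_linear_scaleC_left: "bounded_linear (\<lambda>c::complex. c *\<^sub>C (e::'a::complex_inner))"
  by (rule bounded_linear_intro[where K="norm e"])
    (simp_all add: scaleC_add_left scaleR_scaleC scaleC_scaleC scaleR_conv_of_real norm_scaleC)

lemma bounded_linear_scaleC_right:
  assumes "bounded_linear f"
  shows "bounded_linear (\<lambda>x. c *\<^sub>C (f x::'a::complex_inner))"
proof (rule bounded_linear_intro[where K="cmod c * onorm f"])
  show "norm (c *\<^sub>C f x) \<le> norm x * (cmod c * onorm f)" for x
  proof -
    have "cmod c * norm (f x) \<le> cmod c * (onorm f * norm x)"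
      using onorm[OF assms, of x] by (simp add: mult_left_mono)
    thus ?thesis by (simp add: norm_scaleC mult_ac)
  qed
qed (use assms in \<open>simp_all add: linear_simps scaleC_add_right scaleR_scaleC scaleC_scaleC mult.commute\<close>)

lemma tendsto_scaleC_left:
  "(c \<longlongrightarrow> c0) F \<Longrightarrow> ((\<lambda>w. c w *\<^sub>C (e::'a::complex_inner)) \<longlongrightarrow> c0 *\<^sub>C e) F"
  by (rule bounded_linear.tendsto[OF bounded_linear_scaleC_left])

lemma csubspace_scaleR: "csubspace M \<Longrightarrow> x \<in> M \<Longrightarrow> r *\<^sub>R x \<in> M"
  by (simp add: csubspace_def scaleR_scaleC)

lemma csubspace_diff: "csubspace M \<Longrightarrow> x \<in> M \<Longrightarrow> y \<in> M \<Longrightarrow> x - y \<in> M"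
  unfolding csubspace_def by (metis diff_conv_add_uminus scaleC_minus_left scaleC_one)

section \<open>Orthogonal projections and orthogonal series\<close>

lemma Cauchy_of_minimizing_sequence:
  fixes u :: "'a::complex_inner"
  assumes sub: "csubspace M" and eM: "\<And>k. e k \<in> M"
    and below: "\<And>x. x \<in> M \<Longrightarrow> d \<le> norm (u - x)" and d0: "0 \<le> d"
    and lim: "(\<lambda>k. norm (u - e k)) \<longlonglongrightarrow> d"
  shows "Cauchy e"
proof (rule CauchyI)
  fix \<epsilon> :: real assume "0 < \<epsilon>"
  define \<delta> where "\<delta> k = (norm (u - e k))\<^sup>2 - d\<^sup>2" for k
  have "\<delta> \<longlonglongrightarrow> d\<^sup>2 - d\<^sup>2" unfolding \<delta>_def by (intro tendsto_intros lim)
  hence "eventually (\<lambda>k. \<delta> k < \<epsilon>\<^sup>2 / 4) sequentially"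
    using \<open>0 < \<epsilon>\<close> by (intro order_tendstoD(2)) auto
  then obtain N where N: "\<And>k. k \<ge> N \<Longrightarrow> \<delta> k < \<epsilon>\<^sup>2 / 4"
    unfolding eventually_sequentially by blast
  have bound: "(norm (e j - e k))\<^sup>2 \<le> 2 * \<delta> j + 2 * \<delta> k" for j k
  proof -
    have "(1/2) *\<^sub>R (e j + e k) \<in> M"
      using sub eM by (metis csubspace_def csubspace_scaleR)
    hence "2 * d \<le> 2 * norm (u - (1/2) *\<^sub>R (e j + e k))" using below by simp
    also have "\<dots> = norm ((u - e j) + (u - e k))"
    proof -
      have "(u - e j) + (u - e k) = 2 *\<^sub>R (u - (1/2) *\<^sub>R (e j + e k))"
        by (simp add: algebra_simps scaleR_2)
      thus ?thesis by simp
    qed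
    finally have "(2 * d)\<^sup>2 \<le> (norm ((u - e j) + (u - e k)))\<^sup>2"
      using d0 by (intro power_mono) auto
    moreover have "e j - e k = (u - e k) - (u - e j)" by simp
    ultimately show ?thesis
      using parallelogram_law[of "u - e k" "u - e j"] unfolding \<delta>_def
      by (simp add: add.commute power_mult_distrib)
  qed
  show "\<exists>N. \<forall>m\<ge>N. \<forall>n\<ge>N. norm (e m - e n) < \<epsilon>"
  proof (intro exI allI impI)
    fix m n assume "N \<le> m" "N \<le> n"
    hence "\<delta> m < \<epsilon>\<^sup>2 / 4" "\<delta> n < \<epsilon>\<^sup>2 / 4" using N by auto
    hence "(norm (e m - e n))\<^sup>2 < \<epsilon>\<^sup>2" using bound[of m n] by linarith
    thus "norm (e m - e n) < \<epsilon>" using \<open>0 < \<epsilon>\<close> by (meson less_imp_le power_less_imp_less_base)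
  qed
qed

lemma closest_point_in_csubspace:
  fixes u :: "'a::chilbert_space"
  assumes sub: "csubspace M" and cl: "closed M"
  obtains p where "p \<in> M" "\<And>x. x \<in> M \<Longrightarrow> norm (u - p) \<le> norm (u - x)"
proof -
  define d where "d = Inf ((\<lambda>x. norm (u - x)) ` M)"
  have M0: "0 \<in> M" using sub by (simp add: csubspace_def)
  have bdd: "bdd_below ((\<lambda>x. norm (u - x)) ` M)" by (rule bdd_belowI[of _ 0]) auto
  have below: "d \<le> norm (u - x)" if "x \<in> M" for x
    unfolding d_def using bdd that by (simp add: cInf_lower)
  have d0: "0 \<le> d" unfolding d_def using M0 by (intro cInf_greatest) auto
  have "\<exists>x\<in>M. norm (u - x) < d + 1 / (real k + 1)" for k
  proof -
    have "d < d + 1 / (real k + 1)" by simp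
    then show ?thesis unfolding d_def using M0
      by (subst (asm) cInf_less_iff) (auto simp: bdd)
  qed
  then obtain e where eM: "\<And>k. e k \<in> M" and ek: "\<And>k. norm (u - e k) < d + 1 / (real k + 1)"
    by metis
  have lim: "(\<lambda>k. norm (u - e k)) \<longlonglongrightarrow> d"
  proof (rule real_tendsto_sandwich[where f="\<lambda>k. d" and h="\<lambda>k. d + 1 / (real k + 1)"])
    show "(\<lambda>k. d + 1 / (real k + 1)) \<longlonglongrightarrow> d"
      using tendsto_add[OF tendsto_const[of d] LIMSEQ_inverse_real_of_nat]
      by (simp add: inverse_eq_divide add.commute)
    show "\<forall>\<^sub>F k in sequentially. norm (u - e k) \<le> d + 1 / (real k + 1)"
      using ek by (simp add: less_imp_le)
  qed (use below eM in auto)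
  have "Cauchy e" by (rule Cauchy_of_minimizing_sequence[OF sub eM below d0 lim])
  then obtain p where ep: "e \<longlonglongrightarrow> p" using Cauchy_convergent_iff convergent_def by blast
  have "p \<in> M" using cl eM ep closed_sequentially by blast
  moreover have "(\<lambda>k. norm (u - e k)) \<longlonglongrightarrow> norm (u - p)" by (intro tendsto_intros ep)
  hence "norm (u - p) = d" using LIMSEQ_unique[OF _ lim] by blast
  ultimately show ?thesis using that below by simp
qed

text \<open>Perturbing the closest point \<open>p\<close> by a small multiple of \<open>cinner x (u - p)\<close> along \<open>x\<close>
  would decrease the distance unless that inner product vanishes.\<close>
lemma closest_point_orthogonal:
  fixes u :: "'a::complex_inner"
  assumes sub: "csubspace M" and pM: "p \<in> M" and x: "x \<in> M"
    and closest: "\<And>y. y \<in> M \<Longrightarrow> norm (u - p) \<le> norm (u - y)"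
  shows "cinner x (u - p) = 0"
proof -
  define v where "v = u - p"
  define c where "c = cinner v x"
  define s where "s = 1 / ((norm x)\<^sup>2 + 1)"
  define t where "t = of_real s * cnj c"
  have s0: "0 < s" unfolding s_def by (simp add: add_nonneg_pos)
  have s1: "s * (norm x)\<^sup>2 \<le> 1"
  proof -
    have "0 < (norm x)\<^sup>2 + 1" by (simp add: add_nonneg_pos)
    thus ?thesis unfolding s_def by (simp add: field_simps)
  qed
  have "p + t *\<^sub>C x \<in> M" using sub pM x by (simp add: csubspace_def)
  hence "(norm v)\<^sup>2 \<le> (norm (v - t *\<^sub>C x))\<^sup>2"
    using closest unfolding v_def by (simp add: diff_diff_eq power_mono)
  also have "\<dots> = (norm v)\<^sup>2 - 2 * Re (t * c) + (cmod t)\<^sup>2 * (norm x)\<^sup>2"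
    by (simp add: power2_norm_diff_scaleC c_def)
  also have "Re (t * c) = s * (cmod c)\<^sup>2"
    by (simp add: t_def mult.assoc complex_norm_square[symmetric] mult.commute[of "cnj c"])
  also have "(cmod t)\<^sup>2 = s\<^sup>2 * (cmod c)\<^sup>2"
    using s0 by (simp add: t_def norm_mult power_mult_distrib)
  finally have "0 \<le> - 2 * (s * (cmod c)\<^sup>2) + s * (cmod c)\<^sup>2 * (s * (norm x)\<^sup>2)"
    by (simp add: power2_eq_square algebra_simps)
  moreover have "s * (cmod c)\<^sup>2 * (s * (norm x)\<^sup>2) \<le> s * (cmod c)\<^sup>2"
    using s1 s0 by (simp add: mult_left_le)
  ultimately have "s * (cmod c)\<^sup>2 \<le> 0" by linarith
  hence "c = 0" using s0 by (simp add: mult_le_0_iff)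
  thus ?thesis using cinner_commute[of x v] by (simp add: c_def v_def)
qed

lemma orthogonal_projection_exists:
  fixes u :: "'a::chilbert_space"
  assumes "csubspace M" "closed M"
  shows "\<exists>p\<in>M. \<forall>x\<in>M. cinner x (u - p) = 0"
  using closest_point_in_csubspace[OF assms] closest_point_orthogonal[OF assms(1)] by metis

lemma pythagoras_orthogonal_sum:
  fixes a :: "nat \<Rightarrow> 'a::complex_inner"
  assumes "finite A" and orth: "\<And>n m. n \<noteq> m \<Longrightarrow> cinner (a n) (a m) = 0"
  shows "(norm (\<Sum>n\<in>A. a n))\<^sup>2 = (\<Sum>n\<in>A. (norm (a n))\<^sup>2)"
  using assms(1)
proof (induction A rule: finite_induct)
  case (insert x A)
  have "cinner (\<Sum>n\<in>A. a n) (a x) = 0"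
    using insert(2) unfolding cinner_sum_left by (intro sum.neutral) (metis orth)
  hence "cinner (a x) (\<Sum>n\<in>A. a n) = 0" using cinner_commute by (metis complex_cnj_zero)
  thus ?case using insert by (simp add: power2_norm_add add.commute)
qed simp

lemma Bessel_orthogonal_projections:
  fixes a :: "nat \<Rightarrow> 'a::complex_inner"
  assumes orth: "\<And>n m. n \<noteq> m \<Longrightarrow> cinner (a n) (a m) = 0"
    and proj: "\<And>n. cinner (a n) (u - a n) = 0"
  shows "(norm (u - (\<Sum>n<N. a n)))\<^sup>2 = (norm u)\<^sup>2 - (\<Sum>n<N. (norm (a n))\<^sup>2)"
proof (induction N)
  case (Suc N)
  have "cinner u (a N) = of_real ((norm (a N))\<^sup>2)"
    using proj[of N] cinner_commute[of u "a N"]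
    by (simp add: cinner_diff_right cinner_self_real)
  moreover have "cinner (\<Sum>n<N. a n) (a N) = 0"
    by (auto simp: cinner_sum_left orth intro!: sum.neutral)
  ultimately have "cinner (u - (\<Sum>n<N. a n)) (a N) = of_real ((norm (a N))\<^sup>2)"
    by (simp add: cinner_diff_left)
  hence "(norm ((u - (\<Sum>n<N. a n)) - a N))\<^sup>2
      = (norm (u - (\<Sum>n<N. a n)))\<^sup>2 - (norm (a N))\<^sup>2"
    by (simp only: power2_norm_diff) simp
  thus ?case using Suc by (simp add: diff_diff_eq)
qed simp

lemma orthogonal_series_convergent:
  fixes a :: "nat \<Rightarrow> 'a::{complex_inner, complete_space}"
  assumes orth: "\<And>n m. n \<noteq> m \<Longrightarrow> cinner (a n) (a m) = 0"
    and summable: "summable (\<lambda>n. (norm (a n))\<^sup>2)"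
  shows "convergent (\<lambda>N. \<Sum>n<N. a n)"
proof -
  define S where "S N = (\<Sum>n<N. a n)" for N
  define R where "R N = (\<Sum>n<N. (norm (a n))\<^sup>2)" for N
  have "Cauchy R" unfolding R_def
    using summable summable_LIMSEQ convergent_def Cauchy_convergent_iff by blast
  have tail: "(norm (S m - S n))\<^sup>2 = R m - R n" if "n \<le> m" for m n
  proof -
    have "S m - S n = (\<Sum>k\<in>{n..<m}. a k)"
      using sum_diff_nat_ivl[of 0 n m a] that by (simp add: S_def atLeast0LessThan)
    moreover have "R m - R n = (\<Sum>k\<in>{n..<m}. (norm (a k))\<^sup>2)"
      using sum_diff_nat_ivl[of 0 n m "\<lambda>k. (norm (a k))\<^sup>2"] that by (simp add: R_def atLeast0LessThan)
    ultimately show ?thesis using pythagoras_orthogonal_sum[OF _ orth] by simp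
  qed
  have dist_S: "(norm (S m - S n))\<^sup>2 = \<bar>R m - R n\<bar>" for m n
  proof (cases "n \<le> m")
    case True thus ?thesis using tail[OF True] by (metis abs_of_nonneg zero_le_power2)
  next
    case False
    hence "(norm (S n - S m))\<^sup>2 = R n - R m" using tail by simp
    thus ?thesis by (metis abs_minus_commute abs_of_nonneg norm_minus_commute zero_le_power2)
  qed
  have "Cauchy S"
  proof (rule CauchyI)
    fix \<epsilon> :: real assume e: "0 < \<epsilon>"
    then obtain M where M: "\<forall>m\<ge>M. \<forall>n\<ge>M. dist (R m) (R n) < \<epsilon>\<^sup>2"
      using \<open>Cauchy R\<close> unfolding Cauchy_def by (meson zero_less_power)
    show "\<exists>M. \<forall>m\<ge>M. \<forall>n\<ge>M. norm (S m - S n) < \<epsilon>"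
    proof (intro exI allI impI)
      fix m n assume "M \<le> m" "M \<le> n"
      hence "(norm (S m - S n))\<^sup>2 < \<epsilon>\<^sup>2" using M dist_S by (simp add: dist_real_def)
      thus "norm (S m - S n) < \<epsilon>" using e by (meson less_imp_le power_less_imp_less_base)
    qed
  qed
  thus ?thesis unfolding S_def by (simp add: Cauchy_convergent_iff)
qed

section \<open>Eigenvectors of compact symmetric operators\<close>

lemma approximate_eigenvector_square:
  fixes K :: "'a::complex_inner \<Rightarrow> 'a"
  assumes sym: "\<And>x y. cinner (K x) y = cinner x (K y)"
    and x: "norm x = 1" and KK: "norm (K (K x)) \<le> N * norm (K x)"
    and close: "N - \<delta> < norm (K x)" "norm (K x) \<le> N"
  shows "(norm (K (K x) - N\<^sup>2 *\<^sub>R x))\<^sup>2 \<le> 2 * N^3 * \<delta>"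
proof -
  define a where "a = norm (K x)"
  have a0: "0 \<le> a" unfolding a_def by simp
  hence N0: "0 \<le> N" using close unfolding a_def by linarith
  have "Re (cinner (K (K x)) (N\<^sup>2 *\<^sub>R x)) = N\<^sup>2 * a\<^sup>2"
    by (simp add: cinner_scaleR_right sym cinner_self_real a_def)
  moreover have "(norm (N\<^sup>2 *\<^sub>R x))\<^sup>2 = N^4" using x by (simp add: power_mult_distrib flip: power_mult)
  ultimately have "(norm (K (K x) - N\<^sup>2 *\<^sub>R x))\<^sup>2 = (norm (K (K x)))\<^sup>2 - 2 * (N\<^sup>2 * a\<^sup>2) + N^4"
    unfolding power2_norm_diff by simp
  also have "\<dots> \<le> (N * a)\<^sup>2 - 2 * (N\<^sup>2 * a\<^sup>2) + N^4"
    using KK unfolding a_def by (simp add: power_mono)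
  also have "\<dots> = N\<^sup>2 * ((N - a) * (N + a))"
    by (simp add: power2_eq_square power4_eq_xxxx algebra_simps)
  also have "\<dots> \<le> N\<^sup>2 * (\<delta> * (2 * N))"
    using close a0 N0 unfolding a_def by (intro mult_left_mono mult_mono) auto
  also have "\<dots> = 2 * N^3 * \<delta>" by (simp add: power2_eq_square power3_eq_cube)
  finally show ?thesis .
qed

lemma norm_on_csubspace:
  fixes K :: "'a::complex_inner \<Rightarrow> 'a"
  assumes bl: "bounded_linear K" and injK: "\<And>x. K x = 0 \<Longrightarrow> x = 0"
    and W: "csubspace W" and y: "y \<in> W" "y \<noteq> 0"
  obtains N where "N > 0" "\<And>x. x \<in> W \<Longrightarrow> norm (K x) \<le> N * norm x"
    "\<And>\<delta>. \<delta> > 0 \<Longrightarrow> \<exists>x\<in>W. norm x = 1 \<and> N - \<delta> < norm (K x)"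
proof -
  define S where "S = {x \<in> W. norm x = 1}"
  define N where "N = Sup ((\<lambda>x. norm (K x)) ` S)"
  obtain B where B: "\<And>x. norm (K x) \<le> norm x * B"
    using bounded_linear.bounded[OF bl] by blast
  have bdd: "bdd_above ((\<lambda>x. norm (K x)) ` S)"
    by (rule bdd_aboveI[of _ B]) (use B in \<open>auto simp: S_def, metis mult_1\<close>)
  have normalize: "(1 / norm x) *\<^sub>R x \<in> S" if "x \<in> W" "x \<noteq> 0" for x
    unfolding S_def using that W by (simp add: csubspace_scaleR)
  have K_scaleR: "K (r *\<^sub>R x) = r *\<^sub>R K x" for r x using bl by (simp add: linear_simps)
  have norm_K: "norm (K x) \<le> N * norm x" if x: "x \<in> W" for x
  proof (cases "x = 0")
    case True thus ?thesis using linear_0[OF bounded_linear.linear[OF bl]] by simp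
  next
    case False
    have "norm (K ((1 / norm x) *\<^sub>R x)) \<le> N"
      unfolding N_def using bdd normalize[OF x False] by (simp add: cSup_upper)
    hence "norm (K x) / norm x \<le> N" by (simp add: K_scaleR)
    thus ?thesis using False by (simp add: field_simps)
  qed
  have "0 < norm (K ((1 / norm y) *\<^sub>R y))"
    using injK normalize[OF y] by (fastforce simp: S_def)
  also have "\<dots> \<le> N" unfolding N_def using bdd normalize[OF y] by (simp add: cSup_upper)
  finally have Npos: "0 < N" .
  have "\<exists>x\<in>W. norm x = 1 \<and> N - \<delta> < norm (K x)" if "\<delta> > 0" for \<delta>
  proof -
    have "S \<noteq> {}" using normalize[OF y] by auto
    moreover have "N - \<delta> < Sup ((\<lambda>x. norm (K x)) ` S)" using that by (simp add: N_def)
    ultimately show ?thesis using less_cSup_iff[OF _ bdd] by (auto simp: S_def)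
  qed
  with Npos norm_K show ?thesis by (rule that)
qed

text \<open>A sequence of unit vectors almost attaining the norm \<open>N\<close> of \<open>K\<close> on \<open>W\<close> is an approximate
  eigenvector sequence of \<open>K\<^sup>2\<close> for the eigenvalue \<open>N\<^sup>2\<close>.\<close>
lemma symmetric_approximate_eigenvectors_square:
  fixes K :: "'a::complex_inner \<Rightarrow> 'a"
  assumes bl: "bounded_linear K" and sym: "\<And>x y. cinner (K x) y = cinner x (K y)"
    and injK: "\<And>x. K x = 0 \<Longrightarrow> x = 0"
    and W: "csubspace W" "K ` W \<subseteq> W" and y: "y \<in> W" "y \<noteq> 0"
  obtains N x where "N > 0" "\<And>k. x k \<in> W" "\<And>k. norm (x k) = 1"
    "(\<lambda>k. K (K (x k)) - N\<^sup>2 *\<^sub>R x k) \<longlonglongrightarrow> 0"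
proof -
  obtain N where Npos: "N > 0" and norm_K: "\<And>x. x \<in> W \<Longrightarrow> norm (K x) \<le> N * norm x"
    and approx: "\<And>\<delta>. \<delta> > 0 \<Longrightarrow> \<exists>x\<in>W. norm x = 1 \<and> N - \<delta> < norm (K x)"
    using norm_on_csubspace[OF bl injK W(1) y] by blast
  have "\<forall>k. \<exists>x\<in>W. norm x = 1 \<and> N - 1 / (real k + 1) < norm (K x)"
    using approx by simp
  then obtain x where xW: "\<And>k. x k \<in> W" and xn: "\<And>k. norm (x k) = 1"
    and xk: "\<And>k. N - 1 / (real k + 1) < norm (K (x k))"
    by metis
  have bound: "norm (K (K (x k)) - N\<^sup>2 *\<^sub>R x k) \<le> sqrt (2 * N^3 * (1 / (real k + 1)))" for k
  proof -
    have "K (x k) \<in> W" using W(2) xW by blast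
    hence "norm (K (K (x k))) \<le> N * norm (K (x k))" by (rule norm_K)
    moreover have "norm (K (x k)) \<le> N" using norm_K[OF xW] xn by simp
    ultimately have "(norm (K (K (x k)) - N\<^sup>2 *\<^sub>R x k))\<^sup>2 \<le> 2 * N^3 * (1 / (real k + 1))"
      using approximate_eigenvector_square[OF sym xn _ xk] by blast
    thus ?thesis by (simp add: real_le_rsqrt)
  qed
  have "(\<lambda>k. 1 / (real k + 1)) \<longlonglongrightarrow> 0"
    using LIMSEQ_inverse_real_of_nat by (simp add: inverse_eq_divide add.commute)
  from tendsto_real_sqrt[OF tendsto_mult[OF tendsto_const[of "2 * N^3"] this]]
  have lim0: "(\<lambda>k. sqrt (2 * N^3 * (1 / (real k + 1)))) \<longlonglongrightarrow> 0" by simp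
  have "\<forall>\<^sub>F k in sequentially. norm (K (K (x k)) - N\<^sup>2 *\<^sub>R x k) \<le> sqrt (2 * N^3 * (1 / (real k + 1)))"
    using bound by simp
  from Lim_null_comparison[OF this lim0]
  have "(\<lambda>k. K (K (x k)) - N\<^sup>2 *\<^sub>R x k) \<longlonglongrightarrow> 0" .
  with Npos xW xn show ?thesis by (rule that)
qed

lemma compact_symmetric_eigenvector_square:
  fixes K :: "'a::chilbert_space \<Rightarrow> 'a"
  assumes bl: "bounded_linear K" and cpt: "compact (closure (K ` cball 0 1))"
    and sym: "\<And>x y. cinner (K x) y = cinner x (K y)"
    and injK: "\<And>x. K x = 0 \<Longrightarrow> x = 0"
    and W: "csubspace W" "closed W" "K ` W \<subseteq> W" and y: "y \<in> W" "y \<noteq> 0"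
  obtains v N where "v \<in> W" "v \<noteq> 0" "N > 0" "K (K v) = N\<^sup>2 *\<^sub>R v"
proof -
  obtain N x where Npos: "N > 0" and xW: "\<And>k. x k \<in> W" and xn: "\<And>k. norm (x k) = 1"
    and r: "(\<lambda>k. K (K (x k)) - N\<^sup>2 *\<^sub>R x k) \<longlonglongrightarrow> 0"
    using symmetric_approximate_eigenvectors_square[OF bl sym injK W(1,3) y] by blast
  have "\<forall>k. K (x k) \<in> closure (K ` cball 0 1)" using xn
    by (metis closure_subset image_eqI mem_cball_0 order_refl subsetD)
  then obtain l \<rho> where \<rho>: "strict_mono \<rho>" and l: "(\<lambda>k. K (x (\<rho> k))) \<longlonglongrightarrow> l"
    using compact_imp_seq_compact[OF cpt] by (auto elim!: seq_compactE[where f="\<lambda>k. K (x k)"] simp: o_def)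
  have KKl: "(\<lambda>k. K (K (x (\<rho> k)))) \<longlonglongrightarrow> K l" using bounded_linear.tendsto[OF bl l] .
  have r\<rho>: "(\<lambda>k. K (K (x (\<rho> k))) - N\<^sup>2 *\<^sub>R x (\<rho> k)) \<longlonglongrightarrow> 0"
    using LIMSEQ_subseq_LIMSEQ[OF r \<rho>] by (simp add: o_def)
  define v where "v = (1 / N\<^sup>2) *\<^sub>R K l"
  have xv: "(\<lambda>k. x (\<rho> k)) \<longlonglongrightarrow> v"
  proof -
    have "(\<lambda>k. (1 / N\<^sup>2) *\<^sub>R (K (K (x (\<rho> k))) - (K (K (x (\<rho> k))) - N\<^sup>2 *\<^sub>R x (\<rho> k))))
        \<longlonglongrightarrow> (1 / N\<^sup>2) *\<^sub>R (K l - 0)"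
      by (intro tendsto_scaleR tendsto_const tendsto_diff KKl r\<rho>)
    moreover have "(1 / N\<^sup>2) *\<^sub>R (K (K (x (\<rho> k))) - (K (K (x (\<rho> k))) - N\<^sup>2 *\<^sub>R x (\<rho> k)))
        = x (\<rho> k)" for k
      using Npos by simp
    ultimately show ?thesis by (simp add: v_def)
  qed
  have "v \<in> W" using closed_sequentially[OF W(2) _ xv] xW by blast
  moreover have "norm v = 1"
    using LIMSEQ_unique[OF tendsto_norm[OF xv]] xn by simp
  moreover have "K (K v) = N\<^sup>2 *\<^sub>R v"
  proof -
    have "(\<lambda>k. K (x (\<rho> k))) \<longlonglongrightarrow> K v" using bounded_linear.tendsto[OF bl xv] .
    from bounded_linear.tendsto[OF bl this]
    have "(\<lambda>k. K (K (x (\<rho> k)))) \<longlonglongrightarrow> K (K v)" .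
    from LIMSEQ_unique[OF this KKl] have "K (K v) = K l" .
    thus ?thesis using Npos by (simp add: v_def)
  qed
  moreover have "v \<noteq> 0" using \<open>norm v = 1\<close> by auto
  ultimately show ?thesis using that Npos by blast
qed

lemma compact_symmetric_eigenvector:
  fixes K :: "'a::chilbert_space \<Rightarrow> 'a"
  assumes bl: "bounded_linear K" and cpt: "compact (closure (K ` cball 0 1))"
    and sym: "\<And>x y. cinner (K x) y = cinner x (K y)"
    and injK: "\<And>x. K x = 0 \<Longrightarrow> x = 0"
    and W: "csubspace W" "closed W" "K ` W \<subseteq> W" and y: "y \<in> W" "y \<noteq> 0"
  obtains w \<mu> where "w \<in> W" "w \<noteq> 0" "\<mu> \<noteq> 0" "K w = \<mu> *\<^sub>R w"
proof -
  obtain v N where vW: "v \<in> W" and v0: "v \<noteq> 0" and Npos: "N > 0" and KKv: "K (K v) = N\<^sup>2 *\<^sub>R v"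
    using compact_symmetric_eigenvector_square[OF assms] .
  \<comment> \<open>\<open>(K - N)(K + N) v = 0\<close>: either \<open>v\<close> or \<open>(K + N) v\<close> is an eigenvector of \<open>K\<close>.\<close>
  show ?thesis
  proof (cases "K v + N *\<^sub>R v = 0")
    case True
    hence "K v = (- N) *\<^sub>R v" by (simp add: eq_neg_iff_add_eq_0)
    thus ?thesis using that[of v "-N"] vW v0 Npos by simp
  next
    case False
    have "K (K v + N *\<^sub>R v) = K (K v) + N *\<^sub>R K v" using bl by (simp add: linear_simps)
    also have "\<dots> = N *\<^sub>R (K v + N *\<^sub>R v)" by (simp add: KKv power2_eq_square scaleR_add_right add.commute)
    finally have "K (K v + N *\<^sub>R v) = N *\<^sub>R (K v + N *\<^sub>R v)" .
    moreover have "K v + N *\<^sub>R v \<in> W"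
      using W vW by (auto simp: csubspace_def csubspace_scaleR)
    ultimately show ?thesis using that[of "K v + N *\<^sub>R v" N] False Npos by simp
  qed
qed

section \<open>Symmetric operators with compact inverse\<close>

locale compact_resolvent =
  fixes D :: "'a::chilbert_space set" and T :: "'a \<Rightarrow> 'a" and z :: "nat \<Rightarrow> complex"
  assumes symmetric: "symmetric_op D T" and compact_inverse: "compact_bounded_inverse D T"
    and inj_z: "inj z" and eigenvalues: "range z = {\<mu>. op_eigenvalue D T \<mu>}"
begin

definition Tinv :: "'a \<Rightarrow> 'a" where "Tinv = inv_into D T"

definition eigenspace :: "nat \<Rightarrow> 'a set" where "eigenspace n = {v \<in> D. T v = z n *\<^sub>C v}"

definition eigenspaces_perp :: "'a set" where
  "eigenspaces_perp = {y. \<forall>n. \<forall>e\<in>eigenspace n. cinner e y = 0}"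

lemma csubspace_D: "csubspace D"
  using symmetric by (simp add: symmetric_op_def densely_defined_op_def)

lemma T_add: "x \<in> D \<Longrightarrow> y \<in> D \<Longrightarrow> T (x + y) = T x + T y"
  using symmetric by (simp add: symmetric_op_def densely_defined_op_def clinear_on_def)

lemma T_scaleC: "x \<in> D \<Longrightarrow> T (c *\<^sub>C x) = c *\<^sub>C T x"
  using symmetric by (simp add: symmetric_op_def densely_defined_op_def clinear_on_def)

lemma T_symmetric: "x \<in> D \<Longrightarrow> y \<in> D \<Longrightarrow> cinner (T x) y = cinner x (T y)"
  using symmetric by (simp add: symmetric_op_def)

lemma T_0: "T 0 = 0"
  using T_scaleC[of 0 0] csubspace_D by (simp add: csubspace_def)

lemma T_diff:
  assumes "x \<in> D" "y \<in> D"
  shows "T (x - y) = T x - T y"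
proof -
  have "- y \<in> D" using csubspace_diff[OF csubspace_D _ assms(2), of 0] csubspace_D
    by (simp add: csubspace_def)
  moreover have "T (- y) = - T y"
    using T_scaleC[OF assms(2), of "-1"] by (simp add: scaleC_minus_left scaleC_one)
  ultimately show ?thesis using T_add[OF assms(1), of "- y"] by simp
qed

lemma bounded_linear_Tinv: "bounded_linear Tinv"
  using compact_inverse by (simp add: compact_bounded_inverse_def Tinv_def)

lemma compact_Tinv: "compact (closure (Tinv ` cball 0 1))"
  using compact_inverse by (simp add: compact_bounded_inverse_def Tinv_def)

lemma Tinv_in_D: "Tinv x \<in> D"
  using compact_inverse unfolding Tinv_def compact_bounded_inverse_def
  by (metis UNIV_I bij_betw_def inv_into_into)

lemma T_Tinv [simp]: "T (Tinv x) = x"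
  using compact_inverse unfolding Tinv_def compact_bounded_inverse_def
  by (metis UNIV_I bij_betw_def f_inv_into_f)

lemma Tinv_T: "x \<in> D \<Longrightarrow> Tinv (T x) = x"
  using compact_inverse unfolding Tinv_def compact_bounded_inverse_def
  by (simp add: bij_betw_def inv_into_f_f)

lemma Tinv_scaleC: "Tinv (c *\<^sub>C x) = c *\<^sub>C Tinv x"
  by (metis T_Tinv T_scaleC Tinv_T Tinv_in_D csubspace_D csubspace_def)

lemma Tinv_symmetric: "cinner (Tinv x) y = cinner x (Tinv y)"
  by (metis T_Tinv T_symmetric Tinv_in_D)

lemma Tinv_eq_0: "Tinv x = 0 \<Longrightarrow> x = 0"
  by (metis T_Tinv T_0)

lemma eigenspace_eq: "eigenspace n = {v. v = z n *\<^sub>C Tinv v}"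
proof (intro set_eqI iffI)
  fix v assume "v \<in> eigenspace n"
  hence "v = Tinv (z n *\<^sub>C v)" unfolding eigenspace_def using Tinv_T by force
  thus "v \<in> {v. v = z n *\<^sub>C Tinv v}" by (simp add: Tinv_scaleC)
next
  fix v assume "v \<in> {v. v = z n *\<^sub>C Tinv v}"
  hence v: "v = z n *\<^sub>C Tinv v" by simp
  have "v \<in> D" using v csubspace_D Tinv_in_D by (metis csubspace_def)
  moreover have "T v = z n *\<^sub>C v" using v by (metis T_Tinv T_scaleC Tinv_in_D)
  ultimately show "v \<in> eigenspace n" unfolding eigenspace_def by simp
qed

lemma closed_eigenspace: "closed (eigenspace n)"
proof -
  have "continuous_on UNIV (\<lambda>v. z n *\<^sub>C Tinv v)"
    by (simp add: linear_continuous_on bounded_linear_scaleC_right[OF bounded_linear_Tinv])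
  thus ?thesis unfolding eigenspace_eq by (intro closed_Collect_eq) (auto intro: continuous_on_id)
qed

lemma csubspace_eigenspace: "csubspace (eigenspace n)"
  using csubspace_D unfolding csubspace_def eigenspace_def
  by (auto simp: T_0 T_add T_scaleC scaleC_add_right scaleC_scaleC mult.commute)

lemma eigenvalue_index:
  assumes "v \<in> D" "v \<noteq> 0" "T v = \<mu> *\<^sub>C v"
  obtains n where "z n = \<mu>"
proof -
  have "\<mu> \<in> range z" using assms eigenvalues unfolding op_eigenvalue_def by blast
  thus ?thesis using that by blast
qed

lemma eigenvalue_real: "e \<in> eigenspace n \<Longrightarrow> e \<noteq> 0 \<Longrightarrow> cnj (z n) = z n"
  using T_symmetric[of e e] cinner_self_eq_zero[of e]
  by (simp add: eigenspace_def cinner_scaleC_left cinner_scaleC_right)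

lemma eigenspaces_orthogonal:
  assumes "n \<noteq> m" "e \<in> eigenspace n" "e' \<in> eigenspace m"
  shows "cinner e e' = 0"
proof (cases "e = 0")
  case False
  have "cinner (T e) e' = cinner e (T e')" using assms by (intro T_symmetric) (auto simp: eigenspace_def)
  hence "cnj (z n) * cinner e e' = z m * cinner e e'"
    using assms unfolding eigenspace_def by (simp add: cinner_scaleC_left cinner_scaleC_right)
  moreover have "z n \<noteq> z m" using inj_z assms(1) by (meson injD)
  ultimately show ?thesis using eigenvalue_real[OF assms(2) False] by simp
qed simp

lemma csubspace_eigenspaces_perp: "csubspace eigenspaces_perp"
  unfolding csubspace_def eigenspaces_perp_def by (simp add: cinner_add_right cinner_scaleC_right)

lemma closed_eigenspaces_perp: "closed eigenspaces_perp"
proof -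
  have "eigenspaces_perp = (\<Inter>n. \<Inter>e\<in>eigenspace n. {y. cinner e y = 0})"
    unfolding eigenspaces_perp_def by blast
  moreover have "closed {y. cinner e y = 0}" for e
    using bounded_linear_cinner_right[of e]
    by (intro closed_Collect_eq continuous_on_const) (simp add: linear_continuous_on)
  ultimately show ?thesis by (auto intro!: closed_INT)
qed

lemma Tinv_eigenspaces_perp: "Tinv ` eigenspaces_perp \<subseteq> eigenspaces_perp"
proof -
  have "cinner e (Tinv x) = 0" if x: "x \<in> eigenspaces_perp" and e: "e \<in> eigenspace n" for x e n
  proof -
    have e_eq: "e = z n *\<^sub>C Tinv e" using e eigenspace_eq by auto
    show ?thesis
    proof (cases "z n = 0")
      case True thus ?thesis using e_eq by simp
    next
      case False
      have "cnj (z n) * cinner (Tinv e) x = cinner e x"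
        using arg_cong[OF e_eq, of "\<lambda>v. cinner v x"] by (simp add: cinner_scaleC_left)
      also have "\<dots> = 0" using x e unfolding eigenspaces_perp_def by blast
      finally show ?thesis using False by (simp add: Tinv_symmetric)
    qed
  qed
  thus ?thesis unfolding eigenspaces_perp_def by auto
qed

lemma eigenspaces_perp_eq_0: "eigenspaces_perp = {0}"
proof (rule ccontr)
  assume "eigenspaces_perp \<noteq> {0}"
  then obtain y where "y \<in> eigenspaces_perp" "y \<noteq> 0"
    using csubspace_eigenspaces_perp by (auto simp: csubspace_def)
  then obtain w \<mu> where wW: "w \<in> eigenspaces_perp" and w0: "w \<noteq> 0" and "\<mu> \<noteq> 0"
    and Tinv_w: "Tinv w = \<mu> *\<^sub>R w"
    using compact_symmetric_eigenvector[OF bounded_linear_Tinv compact_Tinv Tinv_symmetric Tinv_eq_0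
        csubspace_eigenspaces_perp closed_eigenspaces_perp Tinv_eigenspaces_perp] by blast
  have "w = Tinv ((1 / \<mu>) *\<^sub>R w)"
    using Tinv_w \<open>\<mu> \<noteq> 0\<close> bounded_linear_Tinv by (simp add: linear_simps)
  hence "w \<in> D" and "T w = complex_of_real (1 / \<mu>) *\<^sub>C w"
    by (metis Tinv_in_D, metis T_Tinv scaleR_scaleC)
  then obtain n where "w \<in> eigenspace n"
    using eigenvalue_index[OF _ w0] unfolding eigenspace_def by (metis (mono_tags, lifting) mem_Collect_eq)
  hence "cinner w w = 0" using wW unfolding eigenspaces_perp_def by blast
  thus False using w0 by (simp add: cinner_self_eq_zero)
qed

lemma resolvent_eigenvector:
  assumes e: "e \<in> eigenspace m" and w: "w \<notin> range z"
  shows "resolvent D T w e = (1 / (w - z m)) *\<^sub>C e"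
proof -
  define y where "y = (1 / (w - z m)) *\<^sub>C e"
  have "w \<noteq> z m" using w by auto
  have eD: "e \<in> D" and Te: "T e = z m *\<^sub>C e" using e by (auto simp: eigenspace_def)
  have yD: "y \<in> D" unfolding y_def using eD csubspace_D by (simp add: csubspace_def)
  have "w *\<^sub>C y - T y = ((w / (w - z m)) - (z m / (w - z m))) *\<^sub>C e"
    unfolding y_def using eD Te by (simp add: T_scaleC scaleC_scaleC scaleC_diff_left)
  also have "(w / (w - z m)) - (z m / (w - z m)) = 1"
    using \<open>w \<noteq> z m\<close> by (simp add: diff_divide_distrib[symmetric])
  finally have img: "w *\<^sub>C y - T y = e" by (simp add: scaleC_one)
  have "inj_on (\<lambda>y. w *\<^sub>C y - T y) D"
  proof (rule inj_onI)
    fix x y assume x: "x \<in> D" and y: "y \<in> D" and eq: "w *\<^sub>C x - T x = w *\<^sub>C y - T y"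
    have "T (x - y) = w *\<^sub>C (x - y)"
      using eq by (simp add: T_diff[OF x y] scaleC_diff_right algebra_simps)
    thus "x = y"
      using eigenvalue_index[OF csubspace_diff[OF csubspace_D x y]] w by (metis eq_iff_diff_eq_0 rangeI)
  qed
  hence "resolvent D T w (w *\<^sub>C y - T y) = y"
    unfolding resolvent_def using yD by (rule inv_into_f_f)
  thus ?thesis using img by (simp add: y_def)
qed

definition eigenprojection :: "nat \<Rightarrow> 'a \<Rightarrow> 'a" where
  "eigenprojection n u = (SOME p. p \<in> eigenspace n \<and> (\<forall>e\<in>eigenspace n. cinner e (u - p) = 0))"

lemma eigenprojection:
  "eigenprojection n u \<in> eigenspace n"
  "e \<in> eigenspace n \<Longrightarrow> cinner e (u - eigenprojection n u) = 0"
proof -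
  have "\<exists>p. p \<in> eigenspace n \<and> (\<forall>e\<in>eigenspace n. cinner e (u - p) = 0)"
    using orthogonal_projection_exists[OF csubspace_eigenspace closed_eigenspace] by blast
  from someI_ex[OF this]
  show "eigenprojection n u \<in> eigenspace n" "e \<in> eigenspace n \<Longrightarrow> cinner e (u - eigenprojection n u) = 0"
    unfolding eigenprojection_def by auto
qed

text \<open>The eigenprojections are pairwise orthogonal, so their partial sums converge by Bessel's
  inequality; the limit differs from \<open>u\<close> by a vector orthogonal to every eigenspace.\<close>
theorem eigenprojection_sums: "(\<lambda>n. eigenprojection n u) sums u"
proof -
  define a where "a n = eigenprojection n u" for n
  have orth: "\<And>n m. n \<noteq> m \<Longrightarrow> cinner (a n) (a m) = 0"
    using eigenspaces_orthogonal eigenprojection(1) unfolding a_def by blast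
  have proj: "\<And>n. cinner (a n) (u - a n) = 0"
    unfolding a_def by (intro eigenprojection)
  have "(\<Sum>n<N. (norm (a n))\<^sup>2) \<le> (norm u)\<^sup>2" for N
    using Bessel_orthogonal_projections[of a u N, OF orth proj] by (metis diff_ge_0_iff_ge zero_le_power2)
  hence "summable (\<lambda>n. (norm (a n))\<^sup>2)" by (intro summableI_nonneg_bounded) auto
  then obtain s where s: "(\<lambda>N. \<Sum>n<N. a n) \<longlonglongrightarrow> s"
    using orthogonal_series_convergent[of a, OF orth] unfolding convergent_def by blast
  have "u - s \<in> eigenspaces_perp" unfolding eigenspaces_perp_def mem_Collect_eq
  proof (intro allI ballI)
    fix m e assume e: "e \<in> eigenspace m"
    have "(\<lambda>N. cinner e (u - (\<Sum>n<N. a n))) \<longlonglongrightarrow> cinner e (u - s)"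
      by (rule bounded_linear.tendsto[OF bounded_linear_cinner_right]) (intro tendsto_intros s)
    moreover have "cinner e (u - (\<Sum>n<N. a n)) = 0" if "Suc m \<le> N" for N
    proof -
      have "cinner e (a n) = (if n = m then cinner e (a m) else 0)" for n
        using eigenspaces_orthogonal[of m n e "a n"] e eigenprojection(1)[of n u] by (auto simp: a_def)
      hence "(\<Sum>n<N. cinner e (a n)) = (\<Sum>n<N. if n = m then cinner e (a m) else 0)" by simp
      also have "\<dots> = cinner e (a m)" using that by simp
      finally have "cinner e (u - (\<Sum>n<N. a n)) = cinner e (u - a m)"
        by (simp add: cinner_diff_right cinner_sum_right)
      thus ?thesis using eigenprojection(2)[OF e] by (simp add: a_def)
    qed
    hence "(\<lambda>N. cinner e (u - (\<Sum>n<N. a n))) \<longlonglongrightarrow> 0"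
      by (intro tendsto_eventually eventually_sequentiallyI[of "Suc m"])
    ultimately show "cinner e (u - s) = 0" using LIMSEQ_unique by blast
  qed
  hence "u = s" using eigenspaces_perp_eq_0 by simp
  thus ?thesis using s unfolding sums_def a_def by simp
qed

end

section \<open>Interpolation\<close>

lemma op_entire_tendsto_apply:
  fixes F :: "complex \<Rightarrow> ('a::complex_inner \<Rightarrow>\<^sub>L 'a)"
  assumes "op_entire F"
  shows "((\<lambda>w. F w x) \<longlongrightarrow> F c x) (at c)"
proof -
  obtain L :: "'a \<Rightarrow>\<^sub>L 'a"
    where L: "((\<lambda>w. onorm (\<lambda>x. inverse (w - c) *\<^sub>C (F w x - F c x) - L x)) \<longlongrightarrow> 0) (at c)"
    using assms unfolding op_entire_def by blast
  define g where "g w = (\<lambda>x. inverse (w - c) *\<^sub>C (F w x - F c x) - L x)" for w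
  have "bounded_linear (g w)" for w
    unfolding g_def
    by (intro bounded_linear_sub bounded_linear_scaleC_right bounded_linear_blinfun_apply bounded_linear_ident)
  have bound: "norm (F w x - F c x) \<le> cmod (w - c) * (onorm (g w) * norm x + norm (L x))"
    if "w \<noteq> c" for w
  proof -
    have "F w x - F c x = (w - c) *\<^sub>C (g w x + L x)"
      using that by (simp add: g_def scaleC_scaleC scaleC_one)
    hence "norm (F w x - F c x) = cmod (w - c) * norm (g w x + L x)" by (simp add: norm_scaleC)
    also have "\<dots> \<le> cmod (w - c) * (onorm (g w) * norm x + norm (L x))"
      using onorm[OF \<open>bounded_linear (g w)\<close>, of x] norm_triangle_ineq[of "g w x" "L x"]
      by (intro mult_left_mono) auto
    finally show ?thesis .
  qed
  have "((\<lambda>w. cmod (w - c) * (onorm (g w) * norm x + norm (L x)))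
      \<longlongrightarrow> cmod (c - c) * (0 * norm x + norm (L x))) (at c)"
    by (intro tendsto_intros) (use L in \<open>simp add: g_def\<close>)
  hence lim: "((\<lambda>w. cmod (w - c) * (onorm (g w) * norm x + norm (L x))) \<longlongrightarrow> 0) (at c)"
    by simp
  have "\<forall>\<^sub>F w in at c. norm (F w x - F c x) \<le> cmod (w - c) * (onorm (g w) * norm x + norm (L x))"
    unfolding eventually_at_filter by (intro always_eventually) (auto intro: bound)
  from Lim_null_comparison[OF this lim] have "((\<lambda>w. F w x - F c x) \<longlongrightarrow> 0) (at c)" .
  thus ?thesis by (simp add: LIM_zero_iff)
qed

lemma tendsto_quotient_at_simple_zero:
  assumes "(Q has_field_derivative Q') (at a)" "Q a = 0"
  shows "((\<lambda>w. Q w / (w - a)) \<longlongrightarrow> Q') (at a)"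
  using assms by (simp add: has_field_derivative_iff)

lemma eventually_nonzero_near_simple_zero:
  assumes "(Q has_field_derivative Q') (at a)" "Q a = 0" "Q' \<noteq> 0"
  shows "eventually (\<lambda>w. Q w \<noteq> 0) (at a)"
  using tendsto_imp_eventually_ne[OF tendsto_quotient_at_simple_zero[OF assms(1,2)] assms(3)]
  by eventually_elim auto

locale compact_resolvent_interpolation = compact_resolvent D T z
  for D :: "'a::chilbert_space set" and T z +
  fixes Q :: "complex \<Rightarrow> complex" and F :: "complex \<Rightarrow> ('a \<Rightarrow>\<^sub>L 'a)"
  assumes holomorphic_Q: "Q holomorphic_on UNIV" and zeros_Q: "{w. Q w = 0} = range z"
    and simple_zeros_Q: "\<And>n. deriv Q (z n) \<noteq> 0"
    and entire_F: "op_entire F"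
    and F_resolvent: "\<And>w x. w \<notin> range z \<Longrightarrow> F w x = Q w *\<^sub>C resolvent D T w x"
begin

lemma Q_has_derivative: "(Q has_field_derivative deriv Q w) (at w)"
  using holomorphic_derivI[OF holomorphic_Q open_UNIV UNIV_I] .

lemma Q_eigenvalue: "Q (z n) = 0"
  using zeros_Q by auto

lemma F_eigenvector:
  assumes "e \<in> eigenspace m" "w \<notin> range z"
  shows "F w e = (Q w / (w - z m)) *\<^sub>C e"
  using F_resolvent[OF assms(2)] resolvent_eigenvector[OF assms] by (simp add: scaleC_scaleC)

text \<open>At an eigenvalue \<open>F\<close> is only known as a limit, and the simple zero of \<open>Q\<close> cancels the pole
  of the resolvent on exactly one eigenspace.\<close>
lemma F_eigenvalue_eigenvector:
  assumes e: "e \<in> eigenspace m"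
  shows "F (z n) e = (if m = n then deriv Q (z n) *\<^sub>C e else 0)"
proof -
  have "eventually (\<lambda>w. Q w \<noteq> 0) (at (z n))"
    by (rule eventually_nonzero_near_simple_zero[OF Q_has_derivative Q_eigenvalue simple_zeros_Q])
  hence "eventually (\<lambda>w. (Q w / (w - z m)) *\<^sub>C e = F w e) (at (z n))"
    by eventually_elim (use F_eigenvector[OF e] zeros_Q in auto)
  moreover have "((\<lambda>w. (Q w / (w - z m)) *\<^sub>C e) \<longlongrightarrow> (if m = n then deriv Q (z n) *\<^sub>C e else 0)) (at (z n))"
  proof (cases "m = n")
    case True thus ?thesis
      using tendsto_scaleC_left[OF tendsto_quotient_at_simple_zero[OF Q_has_derivative Q_eigenvalue]]
      by simp
  next
    case False
    hence "z n \<noteq> z m" using inj_z by (metis injD)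
    have "isCont Q (z n)" using Q_has_derivative DERIV_isCont by blast
    hence "((\<lambda>w. Q w / (w - z m)) \<longlongrightarrow> Q (z n) / (z n - z m)) (at (z n))"
      using \<open>z n \<noteq> z m\<close> by (intro tendsto_intros isCont_tendsto_compose[of _ Q]) auto
    thus ?thesis using tendsto_scaleC_left[of _ 0] False by (simp add: Q_eigenvalue)
  qed
  ultimately have "((\<lambda>w. F w e) \<longlongrightarrow> (if m = n then deriv Q (z n) *\<^sub>C e else 0)) (at (z n))"
    by (rule Lim_transform_eventually[rotated])
  thus ?thesis using tendsto_unique[OF at_neq_bot op_entire_tendsto_apply[OF entire_F]] by simp
qed

lemma F_eigenvalue: "F (z n) u = deriv Q (z n) *\<^sub>C eigenprojection n u"
proof -
  have "(\<lambda>m. F (z n) (eigenprojection m u)) sums F (z n) u"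
    by (rule bounded_linear.sums[OF blinfun.bounded_linear_right eigenprojection_sums])
  moreover have "F (z n) (eigenprojection m u) = (if m = n then deriv Q (z n) *\<^sub>C eigenprojection m u else 0)" for m
    using F_eigenvalue_eigenvector[OF eigenprojection(1)] by simp
  ultimately show ?thesis
    using sums_single[of n "\<lambda>m. deriv Q (z n) *\<^sub>C eigenprojection m u"] sums_unique2 by fastforce
qed

theorem interpolation_series:
  "(\<lambda>n. interp_kernel Q (z n) w *\<^sub>C F (z n) u) sums F w u"
proof (cases "w \<in> range z")
  case True
  then obtain m where m: "w = z m" by auto
  have "interp_kernel Q (z n) w *\<^sub>C F (z n) u = (if n = m then F (z n) u else 0)" for n
    using m Q_eigenvalue inj_z by (auto simp: interp_kernel_def scaleC_one dest: injD)
  thus ?thesis using sums_single[of m "\<lambda>n. F (z n) u"] m by simp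
next
  case False
  have "(\<lambda>n. F w (eigenprojection n u)) sums F w u"
    by (rule bounded_linear.sums[OF blinfun.bounded_linear_right eigenprojection_sums])
  moreover have "F w (eigenprojection n u) = interp_kernel Q (z n) w *\<^sub>C F (z n) u" for n
  proof -
    have "w \<noteq> z n" using False by auto
    thus ?thesis using F_eigenvector[OF eigenprojection(1) False] simple_zeros_Q[of n]
      by (simp add: F_eigenvalue interp_kernel_def scaleC_scaleC)
  qed
  ultimately show ?thesis by simp
qed

end

theorem theorem4p2:
  fixes D :: "'a::chilbert_space set" and T :: "'a \<Rightarrow> 'a"
    and z :: "nat \<Rightarrow> complex" and Q :: "complex \<Rightarrow> complex"
    and F :: "complex \<Rightarrow> ('a \<Rightarrow>\<^sub>L 'a)"
  assumes "separable_hspace TYPE('a)" and "infinite_dimensional TYPE('a)"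
    and "symmetric_op D T" and "compact_bounded_inverse D T"
    and "inj z" and "range z = {mu. op_eigenvalue D T mu}"
    and "Q holomorphic_on UNIV" and "{w. Q w = 0} = range z" and "\<And>n. deriv Q (z n) \<noteq> 0"
    and "\<And>w. cbounded_op (F w)" and "op_entire F"
    and "\<And>w x. w \<notin> range z \<Longrightarrow> blinfun_apply (F w) x = Q w *\<^sub>C resolvent D T w x"
  shows "(\<forall>f\<in>H_space F. \<forall>g\<in>H_space F. (\<forall>n. f (z n) = g (z n)) \<longrightarrow> f = g)
    \<and> (\<forall>f\<in>H_space F. \<forall>w. (\<lambda>n. interp_kernel Q (z n) w *\<^sub>C f (z n)) sums f w)"
proof -
  interpret compact_resolvent_interpolation D T z Q F
    using assms(3-9,11,12) by unfold_locales
  have series: "(\<lambda>n. interp_kernel Q (z n) w *\<^sub>C f (z n)) sums f w" if "f \<in> H_space F" for f w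
    using that interpolation_series unfolding H_space_def by auto
  have "f w = g w" if "f \<in> H_space F" "g \<in> H_space F" "\<forall>n. f (z n) = g (z n)" for f g w
  proof -
    have "(\<lambda>n. interp_kernel Q (z n) w *\<^sub>C g (z n)) sums f w" using series[OF that(1)] that(3) by simp
    thus ?thesis using series[OF that(2)] sums_unique2 by blast
  qed
  thus ?thesis using series by blast
qed

end
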